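(* For every $\Delta q>0$ there exist $k>0$ and $\theta\in(0,1/\Delta q)$ such that, when $1/b$ is Gamma distributed with shape $k$ and scale $\theta$, $$e^{(k+1)\ln(1+\Delta q\,\theta)}=\frac{\mathbb E(1/b)}{M'_{1/b}(-\Delta q)}<M_{1/b}(\Delta q)=(1-\Delta q\,\theta)^{-k},$$ i.e. the R$^2$DP Laplace mechanism with Gamma-distributed $1/b$ can satisfy the necessary condition $\frac{\mathbb E(1/b)}{M'_{1/b}(-\Delta q)}<M_{1/b}(\Delta q)$ for improving on the Laplace mechanism.
   Context: $M_{1/b}(t)=\mathbb E[e^{t/b}]$ is the moment generating function of $1/b$ and $M'_{1/b}$ its derivative. For the Gamma distribution with shape $k$ and scale $\theta$, $M(t)=(1-\theta t)^{-k}$ for $t<1/\theta$. The R$^2$DP Laplace mechanism adds $\mathrm{Lap}(b)$ noise (density $\frac1{2b}e^{-|x|/b}$) with random scale $b$ to a query of sensitivity $\Delta q$. *)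

theory Defs
  imports "HOL-Probability.Probability"
begin

definition gamma_density :: "real \<Rightarrow> real \<Rightarrow> real \<Rightarrow> real" where
  "gamma_density k \<theta> x =
     (if x > 0 then x powr (k - 1) * exp (- x / \<theta>) / (Gamma k * \<theta> powr k) else 0)"

definition mgf :: "(real \<Rightarrow> real) \<Rightarrow> real \<Rightarrow> real" where
  "mgf f t = (\<integral>x. exp (t * x) * f x \<partial>lborel)"

definition mean :: "(real \<Rightarrow> real) \<Rightarrow> real" where
  "mean f = (\<integral>x. x * f x \<partial>lborel)"

end

theory Submission
  imports Defs
begin

text \<open>
  Writing the Gamma density through the kernel \<open>x powr (k - 1) * exp (- c * x)\<close> on
  \<open>x > 0\<close>, whose integral \<open>Gamma k / c powr k\<close> is Euler's integral after the
  substitution \<open>x \<mapsto> c * x\<close>, one finds \<open>M(t) = (1 - \<theta> t) powr (- k)\<close> and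
  \<open>E = k \<theta>\<close>. Hence \<open>M'(t) = k \<theta> (1 - \<theta> t) powr (- k - 1)\<close> and
  \<open>E / M'(- \<Delta>q) = (1 + \<Delta>q \<theta>) powr (k + 1)\<close>. For \<open>k = 1\<close> the condition
  \<open>(1 + x)\<^sup>2 < 1 / (1 - x)\<close> with \<open>x = \<Delta>q \<theta>\<close> holds as soon as
  \<open>x > (sqrt 5 - 1) / 2\<close>; we take \<open>x = 9 / 10\<close>.
\<close>

definition gamma_kernel :: "real \<Rightarrow> real \<Rightarrow> real \<Rightarrow> real" where
  "gamma_kernel k c x = (if x > 0 then x powr (k - 1) * exp (- c * x) else 0)"

lemma borel_measurable_gamma_kernel [measurable]: "gamma_kernel k c \<in> borel_measurable borel"
  unfolding gamma_kernel_def by measurable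

lemma gamma_kernel_nonneg: "0 \<le> gamma_kernel k c x"
  by (simp add: gamma_kernel_def)

lemma nn_integral_gamma_kernel:
  assumes "0 < k" "0 < c"
  shows "(\<integral>\<^sup>+x. gamma_kernel k c x \<partial>lborel) = ennreal (Gamma k / c powr k)"
proof -
  let ?I = "\<integral>\<^sup>+x. gamma_kernel k c x \<partial>lborel"
  have "ennreal (Gamma k) = (\<integral>\<^sup>+t. indicator {0..} t * t powr (k - 1) / exp t \<partial>lborel)"
    using Gamma_conv_nn_integral_real[OF assms(1)] by simp
  also have "\<dots> = c * (\<integral>\<^sup>+x. indicator {0..} (c * x) * (c * x) powr (k - 1) / exp (c * x)
                          \<partial>lborel)"
    using assms
      nn_integral_real_affine[of "\<lambda>t. ennreal (indicator {0..} t * t powr (k - 1) / exp t)" c 0]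
    by simp
  also have "\<dots> = c * (\<integral>\<^sup>+x. c powr (k - 1) * gamma_kernel k c x \<partial>lborel)"
    using assms by (intro arg_cong2[where f="(*)"] nn_integral_cong)
      (auto simp: gamma_kernel_def powr_mult exp_minus field_simps zero_le_mult_iff indicator_def)
  also have "\<dots> = c * c powr (k - 1) * ?I"
    using assms by (simp add: nn_integral_cmult ennreal_mult' gamma_kernel_nonneg mult.assoc)
  also have "\<dots> = c powr k * ?I"
    using assms by (simp add: powr_mult_base flip: ennreal_mult)
  finally have Gamma_eq: "ennreal (Gamma k) = ennreal (c powr k) * ?I" .
  have "?I = ennreal (1 / c powr k * c powr k) * ?I"
    using assms by simp
  also have "\<dots> = ennreal (1 / c powr k) * (ennreal (c powr k) * ?I)"
    by (subst ennreal_mult) (simp_all add: mult.assoc)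
  also have "\<dots> = ennreal (Gamma k / c powr k)"
    using assms by (simp add: flip: Gamma_eq ennreal_mult)
  finally show ?thesis .
qed

lemma has_bochner_integral_gamma_kernel:
  assumes "0 < k" "0 < c"
  shows "has_bochner_integral lborel (gamma_kernel k c) (Gamma k / c powr k)"
  using assms by (intro has_bochner_integral_nn_integral nn_integral_gamma_kernel)
    (auto simp: gamma_kernel_nonneg less_imp_le)

lemma integral_gamma_kernel:
  "0 < k \<Longrightarrow> 0 < c \<Longrightarrow> (\<integral>x. gamma_kernel k c x \<partial>lborel) = Gamma k / c powr k"
  by (rule has_bochner_integral_integral_eq[OF has_bochner_integral_gamma_kernel])

lemma gamma_density_eq_gamma_kernel:
  "gamma_density k \<theta> x = gamma_kernel k (1 / \<theta>) x / (Gamma k * \<theta> powr k)"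
  by (simp add: gamma_density_def gamma_kernel_def)

lemma exp_mult_gamma_kernel: "exp (t * x) * gamma_kernel k c x = gamma_kernel k (c - t) x"
  by (simp add: gamma_kernel_def mult.left_commute left_diff_distrib flip: exp_add)

lemma mult_gamma_kernel: "x * gamma_kernel k c x = gamma_kernel (k + 1) c x"
  by (simp add: gamma_kernel_def powr_mult_base)

lemma mgf_gamma_density:
  assumes "0 < k" "0 < \<theta>" "\<theta> * t < 1"
  shows "mgf (gamma_density k \<theta>) t = (1 - \<theta> * t) powr (- k)"
proof -
  have c: "0 < 1 / \<theta> - t"
    using assms by (simp add: field_simps)
  have Gamma_nonzero: "Gamma k \<noteq> 0"
    using Gamma_real_pos[OF assms(1)] by linarith
  have "mgf (gamma_density k \<theta>) t
      = (\<integral>x. gamma_kernel k (1 / \<theta> - t) x \<partial>lborel) / (Gamma k * \<theta> powr k)"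
    unfolding mgf_def gamma_density_eq_gamma_kernel
    by (simp add: times_divide_eq_right exp_mult_gamma_kernel)
  also have "\<dots> = Gamma k / (1 / \<theta> - t) powr k / (Gamma k * \<theta> powr k)"
    using assms c by (simp add: integral_gamma_kernel)
  also have "\<dots> = (1 - \<theta> * t) powr (- k)"
    using assms Gamma_nonzero
    by (simp add: powr_minus divide_simps mult.commute flip: powr_mult)
  finally show ?thesis .
qed

lemma mean_gamma_density:
  assumes "0 < k" "0 < \<theta>"
  shows "mean (gamma_density k \<theta>) = k * \<theta>"
proof -
  have Gamma_nonzero: "Gamma k \<noteq> 0"
    using Gamma_real_pos[OF assms(1)] by linarith
  have Gamma_succ: "Gamma (k + 1) = k * Gamma k"
    using assms by (intro Gamma_plus1) (auto elim: nonpos_Ints_cases)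
  have "mean (gamma_density k \<theta>)
      = (\<integral>x. gamma_kernel (k + 1) (1 / \<theta>) x \<partial>lborel) / (Gamma k * \<theta> powr k)"
    unfolding mean_def gamma_density_eq_gamma_kernel
    by (simp add: times_divide_eq_right mult_gamma_kernel)
  also have "\<dots> = Gamma (k + 1) / (1 / \<theta>) powr (k + 1) / (Gamma k * \<theta> powr k)"
    using assms by (simp add: integral_gamma_kernel)
  also have "\<dots> = k * \<theta>"
    using assms Gamma_nonzero by (simp add: Gamma_succ powr_add powr_divide)
  finally show ?thesis .
qed

lemma has_real_derivative_mgf_gamma_density:
  assumes "0 < k" "0 < \<theta>" "\<theta> * t < 1"
  shows "(mgf (gamma_density k \<theta>) has_real_derivative
           k * \<theta> * (1 - \<theta> * t) powr (- k - 1)) (at t)"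
proof -
  have "((\<lambda>s. (1 - \<theta> * s) powr (- k)) has_real_derivative
           k * \<theta> * (1 - \<theta> * t) powr (- k - 1)) (at t)"
    using assms by (auto intro!: derivative_eq_intros)
  then show ?thesis
    by (rule has_field_derivative_transform_within_open[where S = "{..<1 / \<theta>}"])
      (use assms in \<open>auto simp: mgf_gamma_density field_simps\<close>)
qed

lemma mean_div_deriv_mgf_gamma_density:
  assumes "0 < k" "0 < \<theta>" "\<theta> * t < 1"
  shows "mean (gamma_density k \<theta>) / deriv (mgf (gamma_density k \<theta>)) t
           = (1 - \<theta> * t) powr (k + 1)"
proof -
  have "(1 - \<theta> * t) powr (k + 1) * (1 - \<theta> * t) powr (- k - 1) = 1"
    using assms by (simp flip: powr_add)
  then show ?thesis
    using assms
    by (simp add: mean_gamma_density field_simps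
        DERIV_imp_deriv[OF has_real_derivative_mgf_gamma_density])
qed

theorem lemmaB1:
  fixes \<Delta>q :: real
  assumes "\<Delta>q > 0"
  shows "\<exists>k \<theta>. k > 0 \<and> 0 < \<theta> \<and> \<theta> < 1 / \<Delta>q \<and>
    exp ((k + 1) * ln (1 + \<Delta>q * \<theta>))
      = mean (gamma_density k \<theta>) / deriv (mgf (gamma_density k \<theta>)) (- \<Delta>q) \<and>
    mean (gamma_density k \<theta>) / deriv (mgf (gamma_density k \<theta>)) (- \<Delta>q)
      < mgf (gamma_density k \<theta>) \<Delta>q \<and>
    mgf (gamma_density k \<theta>) \<Delta>q = (1 - \<Delta>q * \<theta>) powr (- k)"
proof -
  define \<theta> where "\<theta> = 9 / (10 * \<Delta>q)"
  have \<theta>: "0 < \<theta>" "\<theta> < 1 / \<Delta>q" and \<Delta>q\<theta>: "\<Delta>q * \<theta> = 9 / 10"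
    using assms by (auto simp: \<theta>_def field_simps)
  have "\<theta> * \<Delta>q < 1" "\<theta> * - \<Delta>q < 1"
    using \<Delta>q\<theta> assms \<theta> by (simp_all add: mult.commute)
  with \<theta> have ratio:
      "mean (gamma_density 1 \<theta>) / deriv (mgf (gamma_density 1 \<theta>)) (- \<Delta>q) = (19 / 10) powr 2"
    and mgf: "mgf (gamma_density 1 \<theta>) \<Delta>q = (1 / 10) powr (- 1)"
    by (simp_all add: mean_div_deriv_mgf_gamma_density mgf_gamma_density
        mult.commute[of \<theta>] \<Delta>q\<theta>)
  show ?thesis
  proof (intro exI conjI)
    show "exp ((1 + 1) * ln (1 + \<Delta>q * \<theta>))
      = mean (gamma_density 1 \<theta>) / deriv (mgf (gamma_density 1 \<theta>)) (- \<Delta>q)"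
      unfolding ratio \<Delta>q\<theta> by (simp add: powr_def)
    show "mean (gamma_density 1 \<theta>) / deriv (mgf (gamma_density 1 \<theta>)) (- \<Delta>q)
      < mgf (gamma_density 1 \<theta>) \<Delta>q"
      unfolding ratio mgf by (simp add: power2_eq_square powr_minus)
    show "mgf (gamma_density 1 \<theta>) \<Delta>q = (1 - \<Delta>q * \<theta>) powr (- 1)"
      unfolding mgf \<Delta>q\<theta> by simp
  qed (use \<theta> in simp_all)
qed

end
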